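(* Let $a\geq 3$ and $m\geq 2a^2-a+2$ be integers, and suppose $[C(m,a)]$ is colored with red and blue so that there is no monochromatic solution of $L(m,a)$ in $[C(m,a)]$, with both $a-2$ and $a-1$ red. Then all of $1,2,\dots,2a-2$ are red.
   Context: For integers $m\geq 3$, $a\geq 1$, $L(m,a)$ denotes the equation $x_1+x_2+\cdots+x_{m-1}=a x_m$. For a positive integer $n$, $[n]=\{1,\dots,n\}$. A solution of $L(m,a)$ in $[n]$ is an $m$-tuple $(x_1,\dots,x_m)\in[n]^m$ (entries not necessarily distinct) satisfying the equation; given a 2-coloring of $[n]$, it is monochromatic if all $x_i$ have the same color. $C(m,a)$ denotes $\left\lceil \frac{m-1}{a}\left\lceil \frac{m-1}{a}\right\rceil\right\rceil$. *)

theory Defs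
  imports Complex_Main
begin

definition Cma :: "nat \<Rightarrow> nat \<Rightarrow> nat" where
  "Cma m a = nat \<lceil>(of_nat (m - 1) / of_nat a :: rat) * of_int \<lceil>of_nat (m - 1) / (of_nat a :: rat)\<rceil>\<rceil>"

definition is_solution :: "nat \<Rightarrow> nat \<Rightarrow> nat \<Rightarrow> (nat \<Rightarrow> nat) \<Rightarrow> bool" where
  "is_solution m a n x \<longleftrightarrow> (\<forall>i\<in>{1..m}. x i \<in> {1..n}) \<and> (\<Sum>i=1..m-1. x i) = a * x m"

text \<open>A 2-colouring c of [n] (True = red, False = blue) admits a monochromatic solution.\<close>
definition has_mono_solution :: "nat \<Rightarrow> nat \<Rightarrow> nat \<Rightarrow> (nat \<Rightarrow> bool) \<Rightarrow> bool" where
  "has_mono_solution m a n c \<longleftrightarrow>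
     (\<exists>x. is_solution m a n x \<and> (\<forall>i\<in>{1..m}. \<forall>j\<in>{1..m}. c (x i) = c (x j)))"

end

theory Submission
  imports Defs
begin

text \<open>
  Write \<open>k = m - 1\<close> and \<open>n = C(m,a)\<close>, so a solution of \<open>L(m,a)\<close> is a list of \<open>k\<close> terms
  summing to \<open>a y\<close>.  Three general facts drive the argument: a list of \<open>d\<close> terms from
  \<open>[lo, hi]\<close> can realise every sum in \<open>[d lo, d hi]\<close>; every interval of length \<open>a - 1\<close>
  contains a multiple of \<open>a\<close>; and \<open>n \<ge> 2k\<close>, so all numbers that occur lie in \<open>[n]\<close>.

  In the locale \<open>no_mono_colouring\<close> we fix a colouring without monochromatic solutions in
  which \<open>a - 2\<close> and \<open>a - 1\<close> are red, and put \<open>L = \<lceil>k(a-2)/a\<rceil>\<close>, \<open>U = \<lfloor>k(a-1)/a\<rfloor>\<close>.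
  (1) Every element of \<open>[L, U]\<close> is blue, since \<open>a y\<close> is then a sum of \<open>k\<close> red terms
  \<open>a - 2, a - 1\<close>.  (2) Every \<open>i \<le> a - 1\<close> is red: a blue \<open>i\<close> together with blue terms from
  \<open>[L, U]\<close> would sum to \<open>a y\<close> with \<open>y \<in> [L, U]\<close>.  (3) Every \<open>y \<in> [k-a+1, 2(k-a+1)]\<close> is
  blue, as \<open>a - 1\<close> copies of \<open>y\<close> and red terms from \<open>[1, a-1]\<close> summing to \<open>y\<close> make \<open>a y\<close>.
  (4) Every \<open>j \<in> [a, 2a-2]\<close> is red: \<open>k - 1\<close> copies of a blue \<open>j\<close> plus one term of \<open>[L, U]\<close>
  would give \<open>a y\<close> with \<open>y\<close> in the range of (3).
\<close>

lemma has_mono_solution_of_list: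
  fixes xs :: "nat list"
  assumes len: "length xs = k" and sum: "sum_list xs = a * y"
    and mono: "\<forall>v\<in>set (y # xs). v \<in> {1..n} \<and> c v = col"
  shows "has_mono_solution (Suc k) a n c"
proof -
  define x where "x i = (xs @ [y]) ! (i - 1)" for i
  have x_last: "x (Suc k) = y"
    using len by (simp add: x_def nth_append)
  have "(\<Sum>i=1..k. x i) = (\<Sum>i<k. xs ! i)"
    using len by (simp add: sum.atLeast1_atMost_eq x_def nth_append)
  also have "\<dots> = a * x (Suc k)"
    using len sum x_last by (simp add: sum_list_sum_nth atLeast0LessThan)
  finally have eq: "(\<Sum>i=1..Suc k - 1. x i) = a * x (Suc k)" by simp
  have "x i \<in> set (y # xs)" if "i \<in> {1..Suc k}" for i
    using that len by (auto simp: x_def nth_append)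
  then have "\<forall>i\<in>{1..Suc k}. x i \<in> {1..n} \<and> c (x i) = col"
    using mono by blast
  then show ?thesis
    unfolding has_mono_solution_def is_solution_def using eq by (intro exI[of _ x]) auto
qed

text \<open>\<open>C(m,a) \<ge> 2(m-1)\<close> once \<open>m - 1 > a(2a-1)\<close>, because then \<open>\<lceil>(m-1)/a\<rceil> \<ge> 2a\<close>.\<close>
lemma Cma_lower_bound:
  assumes a_pos: "0 < a" and m_large: "a * (2 * a - 1) < m - 1"
  shows "2 * (m - 1) \<le> Cma m a"
proof -
  define q :: rat where "q = of_nat (m - 1) / of_nat a"
  have "of_nat (a * (2 * a - 1)) < (of_nat (m - 1) :: rat)"
    using m_large by (simp only: of_nat_less_iff)
  then have "of_nat (2 * a - 1) < q"
    using a_pos by (simp add: q_def field_simps)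
  then have "int (2 * a - 1) < \<lceil>q\<rceil>"
    by (simp add: less_ceiling_iff)
  then have ceil_q: "of_nat (2 * a) \<le> (of_int \<lceil>q\<rceil> :: rat)"
    using a_pos by linarith
  have "of_nat (2 * (m - 1)) = q * of_nat (2 * a)"
    using a_pos by (simp add: q_def)
  also have "\<dots> \<le> q * of_int \<lceil>q\<rceil>"
    using ceil_q by (intro mult_left_mono) (auto simp: q_def)
  finally have "int (2 * (m - 1)) \<le> \<lceil>q * of_int \<lceil>q\<rceil>\<rceil>"
    by (simp add: le_ceiling_iff)
  then show ?thesis
    unfolding Cma_def q_def by linarith
qed

lemma sum_list_with_entries_between:
  fixes lo hi s :: nat
  assumes "d * lo \<le> s" and "s \<le> d * hi"
  shows "\<exists>zs. length zs = d \<and> sum_list zs = s \<and> set zs \<subseteq> {lo..hi}"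
  using assms
proof (induction d arbitrary: s)
  case 0
  then show ?case by simp
next
  case (Suc d)
  define z where "z = max lo (s - d * hi)"
  have "lo \<le> hi"
    using Suc.prems by (meson le_trans mult_le_cancel1 zero_less_Suc)
  then have z_between: "z \<in> {lo..hi}"
    using Suc.prems(2) by (auto simp: z_def)
  have "d * lo \<le> d * hi"
    using \<open>lo \<le> hi\<close> by simp
  moreover have "z = lo \<or> z = s - d * hi" "lo \<le> z" "s - d * hi \<le> z"
    by (auto simp: z_def)
  ultimately have "d * lo \<le> s - z \<and> s - z \<le> d * hi"
    using Suc.prems[unfolded mult_Suc] by (elim disjE) linarith+
  then obtain zs where "length zs = d" "sum_list zs = s - z" "set zs \<subseteq> {lo..hi}"
    using Suc.IH by blast
  moreover have "z \<le> s"
    using Suc.prems(1) by (auto simp: z_def)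
  ultimately show ?case
    using z_between by (intro exI[of _ "z # zs"]) auto
qed

lemma multiple_between:
  fixes a lo hi :: nat
  assumes "0 < a" and "lo + (a - 1) \<le> hi"
  shows "\<exists>y. lo \<le> a * y \<and> a * y \<le> hi"
proof
  have "a * (hi div a) + hi mod a = hi" "hi mod a < a"
    using assms(1) by simp_all
  then show "lo \<le> a * (hi div a) \<and> a * (hi div a) \<le> hi"
    using assms(2) by linarith
qed

text \<open>The polynomial inequalities for the small case: with \<open>a = i + d + 1\<close>, the possible
  sums of \<open>k - d\<close> copies of \<open>i\<close> and \<open>d\<close> terms from \<open>[L, U]\<close> overlap \<open>[a L, a U]\<close> in an
  interval of length at least \<open>a - 1\<close>.  Proved by substituting \<open>i = 1 + p\<close>, \<open>d = 2 + q\<close>,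
  \<open>k = 2a\<^sup>2 - a + 1 + e\<close>, after which the slack is a polynomial with nonnegative coefficients.\<close>
lemma small_case_room:
  fixes a i d k L U :: int
  assumes a_eq: "a = i + d + 1" and i_pos: "1 \<le> i" and d_ge_2: "2 \<le> d"
    and k_large: "2 * a^2 - a + 1 \<le> k"
    and L_le: "a * L \<le> k * (a - 2) + (a - 1)"
    and U_ge: "k * (a - 1) - (a - 1) \<le> a * U"
  shows "(k - d) * i + d * L + (a - 1) \<le> a * U"
    and "a * L + (a - 1) \<le> (k - d) * i + d * U"
proof -
  obtain e p q :: nat where E: "k = 2 * a^2 - a + 1 + int e" "i = 1 + int p" "d = 2 + int q"
    using k_large i_pos d_ge_2 by (metis zle_iff_zadd)
  have a_pos: "0 < a"
    using a_eq i_pos d_ge_2 by linarith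
  have poly_upper: "a * (k * (a - 1) - (a - 1)) - (a * (k - d) * i + d * (k * (a - 2) + (a - 1)) + a * (a - 1))
      = int (94 + 4*e + 54*p + 105*q + 2*e*q + 48*p*q + 8*p^2 + 36*q^2 + 9*p*q^2 + 5*p^2*q + 4*q^3)"
    unfolding a_eq E by (simp add: algebra_simps power2_eq_square power3_eq_cube)
  have poly_lower: "a * (k - d) * i + d * (k * (a - 1) - (a - 1)) - (a * (k * (a - 2) + (a - 1)) + a * (a - 1))
      = int (20 + 2*e + 33*p + 5*q + e*p + 11*p*q + 15*p^2 + p*q^2 + 3*p^2*q + 2*p^3)"
    unfolding a_eq E by (simp add: algebra_simps power2_eq_square power3_eq_cube)
  have "a * ((k - d) * i + d * L + (a - 1)) = a * (k - d) * i + d * (a * L) + a * (a - 1)"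
    by (simp add: algebra_simps)
  also have "\<dots> \<le> a * (k - d) * i + d * (k * (a - 2) + (a - 1)) + a * (a - 1)"
    using L_le d_ge_2 by simp
  also have "\<dots> \<le> a * (k * (a - 1) - (a - 1))"
    using poly_upper by linarith
  also have "\<dots> \<le> a * (a * U)"
    using U_ge a_pos by simp
  finally show "(k - d) * i + d * L + (a - 1) \<le> a * U"
    using a_pos by simp
  have "a * (a * L + (a - 1)) = a * (a * L) + a * (a - 1)"
    by (simp add: algebra_simps)
  also have "\<dots> \<le> a * (k * (a - 2) + (a - 1)) + a * (a - 1)"
    using L_le a_pos by simp
  also have "\<dots> \<le> a * (k - d) * i + d * (k * (a - 1) - (a - 1))"
    using poly_lower by linarith
  also have "\<dots> \<le> a * (k - d) * i + d * (a * U)"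
    using U_ge d_ge_2 by simp
  also have "\<dots> = a * ((k - d) * i + d * U)"
    by (simp add: algebra_simps)
  finally show "a * L + (a - 1) \<le> (k - d) * i + d * U"
    using a_pos by simp
qed

lemma large_case_room:
  fixes a k :: int
  assumes "3 \<le> a" and "2 * a^2 - a + 1 \<le> k"
  shows "(k - 1) * (2 * a - 2) + (k - 1) \<le> a * (2 * (k - (a - 1)))"
  using assms by (simp add: algebra_simps power2_eq_square)

locale no_mono_colouring =
  fixes a k n :: nat and red :: "nat \<Rightarrow> bool"
  assumes a_ge_3: "3 \<le> a"
    and k_large: "2 * a^2 - a + 1 \<le> k"
    and n_large: "2 * k \<le> n"
    and no_mono: "\<not> has_mono_solution (Suc k) a n red"
    and red_a_minus_2: "red (a - 2)"
    and red_a_minus_1: "red (a - 1)"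
begin

lemma no_mono_list:
  assumes "length xs = k" and "sum_list xs = a * y"
    and "\<forall>v\<in>set (y # xs). v \<in> {1..n} \<and> red v = col"
  shows False
  using has_mono_solution_of_list[OF assms] no_mono by blast

lemma a_pos: "0 < a"
  using a_ge_3 by simp

lemma k_large_int: "2 * int a ^ 2 - int a + 1 \<le> int k"
proof -
  have "a \<le> 2 * a^2"
    by (simp add: power2_eq_square)
  then have "int (2 * a^2 - a + 1) = 2 * int a ^ 2 - int a + 1"
    by simp
  then show ?thesis
    using k_large by linarith
qed

lemma two_a_le_k: "2 * a \<le> k"
proof -
  have "3 * a \<le> a^2"
    using a_ge_3 by (simp add: power2_eq_square)
  then show ?thesis
    using k_large by linarith
qed

text \<open>\<open>L = \<lceil>k(a-2)/a\<rceil>\<close> and \<open>U = \<lfloor>k(a-1)/a\<rfloor>\<close>: the integers \<open>y\<close> for which \<open>a y\<close> is a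
  sum of \<open>k\<close> terms from \<open>{a-2, a-1}\<close>.\<close>
definition L :: nat where "L = (k * (a - 2) + (a - 1)) div a"
definition U :: nat where "U = k * (a - 1) div a"

lemma L_bounds: "k * (a - 2) \<le> a * L" "a * L \<le> k * (a - 2) + (a - 1)"
proof -
  have "a * L + (k * (a - 2) + (a - 1)) mod a = k * (a - 2) + (a - 1)"
    unfolding L_def by simp
  moreover have "(k * (a - 2) + (a - 1)) mod a < a"
    using a_pos by simp
  ultimately show "k * (a - 2) \<le> a * L" "a * L \<le> k * (a - 2) + (a - 1)"
    by linarith+
qed

lemma U_bounds: "a * U \<le> k * (a - 1)" "k * (a - 1) \<le> a * U + (a - 1)"
proof -
  have "a * U + k * (a - 1) mod a = k * (a - 1)"
    unfolding U_def by simp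
  moreover have "k * (a - 1) mod a < a"
    using a_pos by simp
  ultimately show "a * U \<le> k * (a - 1)" "k * (a - 1) \<le> a * U + (a - 1)"
    by linarith+
qed

lemma L_bound_int: "int a * int L \<le> int k * (int a - 2) + (int a - 1)"
proof -
  have "int (a * L) \<le> int (k * (a - 2) + (a - 1))"
    using L_bounds(2) by (simp only: of_nat_le_iff)
  then show ?thesis
    using a_ge_3 by simp
qed

lemma U_bound_int: "int k * (int a - 1) - (int a - 1) \<le> int a * int U"
proof -
  have "int (k * (a - 1)) \<le> int (a * U + (a - 1))"
    using U_bounds(2) by (simp only: of_nat_le_iff)
  then show ?thesis
    using a_ge_3 by simp
qed

lemma L_U_gap: "L + (a - 1) \<le> U"
proof -
  have "3 * int a \<le> int a * int a"
    using a_ge_3 by simp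
  then have "int a * (int L + (int a - 1)) \<le> int a * int U"
    using L_bound_int U_bound_int k_large_int by (simp add: algebra_simps power2_eq_square)
  then show ?thesis
    using a_pos by simp
qed

lemma scaled_gap:
  assumes "1 \<le> c"
  shows "c * L + (a - 1) \<le> c * U"
proof -
  have "c * L + c * (a - 1) \<le> c * U"
    using mult_le_mono2[OF L_U_gap, of c] by (simp only: add_mult_distrib2)
  moreover have "a - 1 \<le> c * (a - 1)"
    using assms by simp
  ultimately show ?thesis
    by linarith
qed

lemma L_pos: "1 \<le> L"
proof -
  have "k * 1 \<le> k * (a - 2)"
    using a_ge_3 by (intro mult_le_mono2) linarith
  then have "a * 1 \<le> a * L"
    using L_bounds(1) two_a_le_k by linarith
  then show ?thesis
    using a_pos by simp
qed

lemma U_less_k: "U < k"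
proof -
  have "k * (a - 1) < k * a"
    using two_a_le_k a_pos by simp
  then have "a * U < a * k"
    using U_bounds(1) by (simp only: mult.commute[of k a])
  then show ?thesis
    by simp
qed

lemma middle_in_range: "L \<le> v \<Longrightarrow> v \<le> U \<Longrightarrow> v \<in> {1..n}"
  using L_pos U_less_k n_large by auto

text \<open>Every \<open>y \<in> [L, U]\<close> is blue: otherwise \<open>a y\<close>, being a sum of \<open>k\<close> terms from the red
  pair \<open>{a-2, a-1}\<close>, gives a red solution.\<close>
lemma middle_blue:
  assumes "L \<le> y" and "y \<le> U"
  shows "\<not> red y"
proof
  assume red_y: "red y"
  have "k * (a - 2) \<le> a * y" "a * y \<le> k * (a - 1)"
    using assms L_bounds(1) U_bounds(1) mult_le_mono2[of _ _ a] by (meson le_trans)+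
  then obtain xs where xs: "length xs = k" "sum_list xs = a * y" "set xs \<subseteq> {a - 2..a - 1}"
    using sum_list_with_entries_between by blast
  have "v = a - 2 \<or> v = a - 1" if "v \<in> {a - 2..a - 1}" for v
    using that by auto
  then have "\<forall>v\<in>set xs. v \<in> {1..n} \<and> red v"
    using xs(3) red_a_minus_2 red_a_minus_1 a_ge_3 two_a_le_k n_large by fastforce
  then show False
    using no_mono_list[OF xs(1,2), of True] red_y middle_in_range assms by auto
qed

lemma middle_sum:
  assumes d_pos: "1 \<le> d"
    and upper: "base + d * L + (a - 1) \<le> a * U" and lower: "a * L + (a - 1) \<le> base + d * U"
  obtains y zs where "L \<le> y" "y \<le> U" "length zs = d" "set zs \<subseteq> {L..U}"
    "base + sum_list zs = a * y"
proof -
  have "max (base + d * L) (a * L) + (a - 1) \<le> min (base + d * U) (a * U)"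
    using upper lower scaled_gap[OF d_pos] scaled_gap[of a] a_pos by (auto simp: max_def min_def)
  then obtain y where y: "max (base + d * L) (a * L) \<le> a * y" "a * y \<le> min (base + d * U) (a * U)"
    using multiple_between[OF a_pos] by blast
  then have y_bounds: "base + d * L \<le> a * y" "a * y \<le> base + d * U" "L \<le> y" "y \<le> U"
    using a_pos by simp_all
  then have "d * L \<le> a * y - base" "a * y - base \<le> d * U"
    by linarith+
  then obtain zs where "length zs = d" "sum_list zs = a * y - base" "set zs \<subseteq> {L..U}"
    using sum_list_with_entries_between by blast
  then show ?thesis
    using that y_bounds by simp
qed

text \<open>For \<open>i \<le> a - 3\<close> put \<open>d = a - 1 - i\<close>: if \<open>i\<close> were blue,
  \<open>k - d\<close> copies of \<open>i\<close> and \<open>d\<close> blue terms from \<open>[L, U]\<close> would sum to \<open>a y\<close> for a blue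
  \<open>y \<in> [L, U]\<close>.\<close>
lemma small_red:
  assumes i_pos: "1 \<le> i" and i_le: "i \<le> a - 1"
  shows "red i"
proof (cases "a - 2 \<le> i")
  case True
  then have "i = a - 2 \<or> i = a - 1"
    using i_le by linarith
  then show ?thesis
    using red_a_minus_2 red_a_minus_1 by blast
next
  case False
  define d where "d = a - 1 - i"
  have d_ge_2: "2 \<le> d" and d_le_k: "d \<le> k"
    using False two_a_le_k unfolding d_def by linarith+
  define base where "base = (k - d) * i"
  have "int a = int i + int d + 1" "int base = (int k - int d) * int i"
    using False d_le_k unfolding d_def base_def by simp_all
  moreover have "1 \<le> int i" "2 \<le> int d"
    using i_pos d_ge_2 by simp_all
  ultimately have "int base + int d * int L + (int a - 1) \<le> int a * int U"
    "int a * int L + (int a - 1) \<le> int base + int d * int U"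
    using small_case_room[OF _ _ _ k_large_int L_bound_int U_bound_int] by simp_all
  then have "int (base + d * L + (a - 1)) \<le> int (a * U)"
    "int (a * L + (a - 1)) \<le> int (base + d * U)"
    using a_pos by simp_all
  then have room: "base + d * L + (a - 1) \<le> a * U" "a * L + (a - 1) \<le> base + d * U"
    by (simp_all only: of_nat_le_iff)
  have d_pos: "1 \<le> d"
    using d_ge_2 by simp
  obtain y zs where y: "L \<le> y" "y \<le> U" and zs: "length zs = d" "set zs \<subseteq> {L..U}"
    and sum_eq: "base + sum_list zs = a * y"
    using middle_sum[OF d_pos room] by blast
  show "red i"
  proof (rule ccontr)
    assume blue_i: "\<not> red i"
    define xs where "xs = replicate (k - d) i @ zs"
    have "length xs = k" "sum_list xs = a * y"
      using zs sum_eq d_le_k unfolding xs_def base_def by (simp_all add: sum_list_replicate)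
    moreover have "\<forall>v\<in>set (y # xs). v \<in> {1..n} \<and> red v = False"
      using zs(2) y middle_blue middle_in_range blue_i i_pos i_le two_a_le_k n_large
      unfolding xs_def by (fastforce dest: in_set_replicate[THEN iffD1])
    ultimately show False
      by (rule no_mono_list)
  qed
qed

text \<open>Every \<open>y \<in> [k - (a-1), 2(k - (a-1))]\<close> is blue: otherwise \<open>a - 1\<close> copies of \<open>y\<close> and
  \<open>k - (a-1)\<close> terms from the red interval \<open>[1, a-1]\<close> summing to \<open>y\<close> give a red solution.\<close>
lemma upper_blue:
  assumes y_lower: "k - (a - 1) \<le> y" and y_upper: "y \<le> 2 * (k - (a - 1))"
  shows "\<not> red y"
proof
  assume red_y: "red y"
  have y_range: "y \<in> {1..n}"
    using y_lower y_upper two_a_le_k a_pos n_large unfolding atLeastAtMost_iff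
    by (intro conjI) linarith+
  have "(k - (a - 1)) * 2 \<le> (k - (a - 1)) * (a - 1)"
    using a_ge_3 by (intro mult_le_mono2) linarith
  then have "(k - (a - 1)) * 1 \<le> y" "y \<le> (k - (a - 1)) * (a - 1)"
    using y_lower y_upper by linarith+
  then obtain zs where zs: "length zs = k - (a - 1)" "sum_list zs = y" "set zs \<subseteq> {1..a - 1}"
    using sum_list_with_entries_between by blast
  define xs where "xs = replicate (a - 1) y @ zs"
  have "length xs = k" "sum_list xs = a * y"
    using zs two_a_le_k a_pos unfolding xs_def by (simp_all add: sum_list_replicate algebra_simps)
  moreover have "\<forall>v\<in>set (y # xs). v \<in> {1..n} \<and> red v = True"
    using zs(3) y_range red_y small_red two_a_le_k n_large unfolding xs_def
    by (fastforce dest: in_set_replicate[THEN iffD1])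
  ultimately show False
    by (rule no_mono_list)
qed

text \<open>If \<open>j\<close> were blue, choose \<open>y\<close> with
  \<open>(k-1) j + L \<le> a y \<le> (k-1) j + U\<close>; then \<open>k - 1\<close> copies of \<open>j\<close> and the blue term
  \<open>a y - (k-1) j \<in> [L, U]\<close> sum to \<open>a y\<close>, where \<open>y\<close> is blue by \<open>upper_blue\<close>.\<close>
lemma large_red:
  assumes j_ge: "a \<le> j" and j_le: "j \<le> 2 * a - 2"
  shows "red j"
proof (rule ccontr)
  assume blue_j: "\<not> red j"
  define base where "base = (k - 1) * j"
  obtain y where y: "base + L \<le> a * y" "a * y \<le> base + U"
    using multiple_between[OF a_pos, of "base + L" "base + U"] L_U_gap by auto
  have y_lower: "k - (a - 1) \<le> y"
  proof -
    have "a * (k - 1) = (k - 1) * a"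
      by simp
    also have "\<dots> \<le> base"
      using j_ge unfolding base_def by (rule mult_le_mono2)
    also have "\<dots> \<le> a * y"
      using y by linarith
    finally have "k - 1 \<le> y"
      using a_pos by simp
    then show ?thesis
      using a_ge_3 by linarith
  qed
  have y_upper: "y \<le> 2 * (k - (a - 1))"
  proof -
    have "base \<le> (k - 1) * (2 * a - 2)"
      using j_le unfolding base_def by (rule mult_le_mono2)
    then have "a * y \<le> (k - 1) * (2 * a - 2) + (k - 1)"
      using y U_less_k by linarith
    then have "int (a * y) \<le> int ((k - 1) * (2 * a - 2) + (k - 1))"
      by (simp only: of_nat_le_iff)
    also have "\<dots> = (int k - 1) * (2 * int a - 2) + (int k - 1)"
      using a_ge_3 two_a_le_k by simp
    also have "\<dots> \<le> int a * (2 * (int k - (int a - 1)))"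
      using large_case_room a_ge_3 k_large_int by simp
    also have "\<dots> = int (a * (2 * (k - (a - 1))))"
      using a_ge_3 two_a_le_k by simp
    finally have "a * y \<le> a * (2 * (k - (a - 1)))"
      by (simp only: of_nat_le_iff)
    then show ?thesis
      using a_pos by simp
  qed
  define b where "b = a * y - base"
  have b_middle: "L \<le> b" "b \<le> U"
    using y unfolding b_def by linarith+
  have "length (replicate (k - 1) j @ [b]) = k" "sum_list (replicate (k - 1) j @ [b]) = a * y"
    using two_a_le_k a_pos y unfolding b_def base_def by (simp_all add: sum_list_replicate)
  moreover have "\<forall>v\<in>set (y # replicate (k - 1) j @ [b]). v \<in> {1..n} \<and> red v = False"
    using upper_blue[OF y_lower y_upper] blue_j j_ge j_le a_ge_3 two_a_le_k n_large y_lower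
      y_upper middle_in_range[OF b_middle] middle_blue[OF b_middle]
    by (auto dest: in_set_replicate[THEN iffD1])
  ultimately show False
    by (rule no_mono_list)
qed

end

theorem lemma8:
  fixes m a :: nat and red :: "nat \<Rightarrow> bool"
  assumes "a \<ge> 3"
    and "m \<ge> 2 * a^2 - a + 2"
    and "\<not> has_mono_solution m a (Cma m a) red"
    and "red (a - 2)" and "red (a - 1)"
  shows "\<forall>i\<in>{1..2*a-2}. red i"
proof -
  have a_sq: "a * (2 * a - 1) = 2 * a^2 - a"
    by (simp add: power2_eq_square diff_mult_distrib2)
  have m_eq: "Suc (m - 1) = m"
    using assms(2) by linarith
  interpret no_mono_colouring a "m - 1" "Cma m a" red
  proof
    show "2 * (m - 1) \<le> Cma m a"
      using Cma_lower_bound assms(1,2) a_sq by simp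
  qed (use assms m_eq in simp_all)
  show ?thesis
  proof
    fix i assume "i \<in> {1..2*a-2}"
    then show "red i"
      using small_red large_red by (cases "i \<le> a - 1") auto
  qed
qed

end
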